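(* Let $\Gamma$ be a routing game, $\mathbf{x}$ a flow in $\Gamma$, and $\mathbf{y},\mathbf{y}'\in\mathbb{R}^E$ congestion vectors with $\|\mathbf{y}-\mathbf{y}'\|_\infty\le b$. Then for any $\zeta>0$, every player who is $\zeta$-satisfied in $\mathbf{x}$ with respect to $\mathbf{y}$ is also $\zeta'$-satisfied with respect to $\mathbf{y}'$, where $$\zeta'=\zeta+2m\gamma b.$$
   Context: Routing game $\Gamma$: directed graph $G=(V,E)$, $m=|E|$, $n$ players with demands $s_i=(s_i^1,s_i^2)$, edge latency functions $L_e$ that are $\gamma$-Lipschitz (e.g. $L_e(y)=\ell_e(y)+\tau_e$ with $\ell_e$ non-decreasing, convex, twice differentiable, $\ell_e(n)\le n$, $\gamma$-Lipschitz, and $\tau_e$ constant). $\mathcal{F}(s_i)\subseteq\{0,1\}^m$ integral unit $s_i^1$-to-$s_i^2$ flows. For congestion $\mathbf{y}$, $c_{\mathbf{x}_i}(\mathbf{y})=\sum_ex_{i,e}L_e(y_e)$; player $i$ with flow $\mathbf{x}_i$ is $\rho$-unsatisfied w.r.t. $\mathbf{y}$ if some $\mathbf{x}_i'\in\mathcal{F}(s_i)$ has $c_{\mathbf{x}_i'}(\mathbf{y}-\mathbf{x}_i+\mathbf{x}_i')\le c_{\mathbf{x}_i}(\mathbf{y})-\rho$, and $\rho$-satisfied otherwise. *)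

theory Defs
  imports "HOL-Analysis.Analysis"
begin

text \<open>A directed graph is given by a vertex set V, an edge set E and tail/head maps.
  Vectors indexed by edges are functions 'e => real (only values on E matter).\<close>

definition digraph :: "'v set \<Rightarrow> 'e set \<Rightarrow> ('e \<Rightarrow> 'v) \<Rightarrow> ('e \<Rightarrow> 'v) \<Rightarrow> bool" where
  "digraph V E src tgt \<longleftrightarrow> finite V \<and> finite E \<and> (\<forall>e\<in>E. src e \<in> V \<and> tgt e \<in> V)"

definition unit_flows ::
  "'v set \<Rightarrow> 'e set \<Rightarrow> ('e \<Rightarrow> 'v) \<Rightarrow> ('e \<Rightarrow> 'v) \<Rightarrow> 'v \<Rightarrow> 'v \<Rightarrow> ('e \<Rightarrow> real) set" where
  "unit_flows V E src tgt s t = {x.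
     (\<forall>e\<in>E. x e \<in> {0, 1}) \<and> (\<forall>e. e \<notin> E \<longrightarrow> x e = 0) \<and>
     (\<forall>v\<in>V. (\<Sum>e\<in>{e\<in>E. src e = v}. x e) - (\<Sum>e\<in>{e\<in>E. tgt e = v}. x e)
              = (if v = s then 1 else 0) - (if v = t then 1 else 0))}"

definition flow_cost :: "'e set \<Rightarrow> ('e \<Rightarrow> real \<Rightarrow> real) \<Rightarrow> ('e \<Rightarrow> real) \<Rightarrow> ('e \<Rightarrow> real) \<Rightarrow> real" where
  "flow_cost E L x y = (\<Sum>e\<in>E. x e * L e (y e))"

definition unsatisfied ::
  "'e set \<Rightarrow> ('e \<Rightarrow> real \<Rightarrow> real) \<Rightarrow> ('e \<Rightarrow> real) set \<Rightarrow> ('e \<Rightarrow> real) \<Rightarrow> ('e \<Rightarrow> real) \<Rightarrow> real \<Rightarrow> bool" where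
  "unsatisfied E L F x y \<rho> \<longleftrightarrow>
     (\<exists>x'\<in>F. flow_cost E L x' (\<lambda>e. y e - x e + x' e) \<le> flow_cost E L x y - \<rho>)"

definition satisfied ::
  "'e set \<Rightarrow> ('e \<Rightarrow> real \<Rightarrow> real) \<Rightarrow> ('e \<Rightarrow> real) set \<Rightarrow> ('e \<Rightarrow> real) \<Rightarrow> ('e \<Rightarrow> real) \<Rightarrow> real \<Rightarrow> bool" where
  "satisfied E L F x y \<rho> \<longleftrightarrow> \<not> unsatisfied E L F x y \<rho>"

end

theory Submission
  imports Defs
begin

text \<open>Moving the congestion by at most b per edge moves the cost of a 0/1 flow by at most
  m\<gamma>b, one \<gamma>b per edge. Both the deviation cost c_x'(y - x + x') and the current cost
  c_x(y) move by at most that much, so an improvement by \<zeta> + 2m\<gamma>b with respect to y'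
  is an improvement by \<zeta> with respect to y.\<close>

lemma flow_cost_lipschitz:
  assumes "finite E"
    and lip: "\<forall>e\<in>E. \<gamma>-lipschitz_on UNIV (L e)"
    and bounded: "\<forall>e\<in>E. \<bar>z e\<bar> \<le> 1"
    and close: "\<forall>e\<in>E. \<bar>u e - v e\<bar> \<le> b"
  shows "\<bar>flow_cost E L z u - flow_cost E L z v\<bar> \<le> real (card E) * \<gamma> * b"
proof -
  have "\<bar>flow_cost E L z u - flow_cost E L z v\<bar> = \<bar>\<Sum>e\<in>E. z e * (L e (u e) - L e (v e))\<bar>"
    unfolding flow_cost_def by (simp add: sum_subtractf[symmetric] algebra_simps)
  also have "\<dots> \<le> (\<Sum>e\<in>E. \<bar>z e * (L e (u e) - L e (v e))\<bar>)"
    by (rule sum_abs)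
  also have "\<dots> \<le> (\<Sum>e\<in>E. \<gamma> * b)"
  proof (rule sum_mono)
    fix e assume e: "e \<in> E"
    have "\<gamma> \<ge> 0"
      using lip e lipschitz_on_nonneg by blast
    have "\<bar>L e (u e) - L e (v e)\<bar> \<le> \<gamma> * \<bar>u e - v e\<bar>"
      using lip e lipschitz_onD[of \<gamma> UNIV "L e" "u e" "v e"] by (simp add: dist_real_def)
    also have "\<dots> \<le> \<gamma> * b"
      using close e \<open>\<gamma> \<ge> 0\<close> by (simp add: mult_left_mono)
    finally have latency: "\<bar>L e (u e) - L e (v e)\<bar> \<le> \<gamma> * b" .
    have "\<bar>z e * (L e (u e) - L e (v e))\<bar> \<le> 1 * \<bar>L e (u e) - L e (v e)\<bar>"
      unfolding abs_mult using bounded e by (intro mult_right_mono) auto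
    with latency show "\<bar>z e * (L e (u e) - L e (v e))\<bar> \<le> \<gamma> * b"
      by simp
  qed
  also have "\<dots> = real (card E) * \<gamma> * b"
    by simp
  finally show ?thesis .
qed

lemma satisfied_perturb:
  assumes "finite E"
    and lip: "\<forall>e\<in>E. \<gamma>-lipschitz_on UNIV (L e)"
    and F_bounded: "\<forall>x'\<in>F. \<forall>e\<in>E. \<bar>x' e\<bar> \<le> 1"
    and x_bounded: "\<forall>e\<in>E. \<bar>x e\<bar> \<le> 1"
    and close: "\<forall>e\<in>E. \<bar>y e - y' e\<bar> \<le> b"
    and sat: "satisfied E L F x y \<zeta>"
  shows "satisfied E L F x y' (\<zeta> + 2 * real (card E) * \<gamma> * b)"
  unfolding satisfied_def unsatisfied_def
proof
  let ?\<delta> = "real (card E) * \<gamma> * b"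
  assume "\<exists>x'\<in>F. flow_cost E L x' (\<lambda>e. y' e - x e + x' e)
                    \<le> flow_cost E L x y' - (\<zeta> + 2 * real (card E) * \<gamma> * b)"
  then obtain x' where "x' \<in> F"
    and improves: "flow_cost E L x' (\<lambda>e. y' e - x e + x' e) \<le> flow_cost E L x y' - (\<zeta> + 2 * ?\<delta>)"
    by auto
  have current: "\<bar>flow_cost E L x y - flow_cost E L x y'\<bar> \<le> ?\<delta>"
    using flow_cost_lipschitz[OF \<open>finite E\<close> lip x_bounded close] .
  have "\<bar>flow_cost E L x' (\<lambda>e. y e - x e + x' e) - flow_cost E L x' (\<lambda>e. y' e - x e + x' e)\<bar> \<le> ?\<delta>"
    using \<open>x' \<in> F\<close> F_bounded close
    by (intro flow_cost_lipschitz[OF \<open>finite E\<close> lip]) auto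
  with improves current
  have "flow_cost E L x' (\<lambda>e. y e - x e + x' e) \<le> flow_cost E L x y - \<zeta>"
    by linarith
  with \<open>x' \<in> F\<close> have "unsatisfied E L F x y \<zeta>"
    unfolding unsatisfied_def by blast
  with sat show False
    unfolding satisfied_def by blast
qed

lemma unit_flows_bounded: "\<forall>x\<in>unit_flows V E src tgt s t. \<forall>e\<in>E. \<bar>x e\<bar> \<le> 1"
  by (auto simp: unit_flows_def)

theorem lemmaB4:
  fixes V :: "'v set" and E :: "'e set" and src tgt :: "'e \<Rightarrow> 'v"
    and L :: "'e \<Rightarrow> real \<Rightarrow> real" and \<gamma> :: real
    and n :: nat and s :: "nat \<Rightarrow> 'v \<times> 'v" and x :: "nat \<Rightarrow> 'e \<Rightarrow> real"
    and y y' :: "'e \<Rightarrow> real" and b \<zeta> :: real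
  assumes graph: "digraph V E src tgt"
    and lip: "\<forall>e\<in>E. \<gamma>-lipschitz_on UNIV (L e)"
    and demands: "\<forall>i<n. fst (s i) \<in> V \<and> snd (s i) \<in> V"
    and flow: "\<forall>i<n. x i \<in> unit_flows V E src tgt (fst (s i)) (snd (s i))"
    and close: "\<forall>e\<in>E. \<bar>y e - y' e\<bar> \<le> b"
    and zeta: "\<zeta> > 0"
  shows "\<forall>i<n. satisfied E L (unit_flows V E src tgt (fst (s i)) (snd (s i))) (x i) y \<zeta>
           \<longrightarrow> satisfied E L (unit_flows V E src tgt (fst (s i)) (snd (s i))) (x i) y'
                 (\<zeta> + 2 * real (card E) * \<gamma> * b)"
proof (intro allI impI)
  fix i assume "i < n"
    and sat: "satisfied E L (unit_flows V E src tgt (fst (s i)) (snd (s i))) (x i) y \<zeta>"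
  have "finite E"
    using graph by (simp add: digraph_def)
  moreover have "\<forall>e\<in>E. \<bar>x i e\<bar> \<le> 1"
    using flow \<open>i < n\<close> unit_flows_bounded[of V E src tgt "fst (s i)" "snd (s i)"] by simp
  ultimately show "satisfied E L (unit_flows V E src tgt (fst (s i)) (snd (s i))) (x i) y'
      (\<zeta> + 2 * real (card E) * \<gamma> * b)"
    using satisfied_perturb[OF _ lip unit_flows_bounded _ close sat] by blast
qed

end
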